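(* Let $x:M^n\to\mathbb{R}^{n+1}$ be a locally strongly convex centroaffine hypersurface, and suppose there is a non-constant smooth function $\mu$ on $M^n$ such that $(\hat\nabla_ZK)(X,Y)=\mu\big(h(X,Y)Z+h(X,Z)Y+h(Y,Z)X\big)$ for all tangent vectors $X,Y,Z$ at every point. Let $p\in M^n$ be a point with $d\mu_p\ne0$, and let $\{e_1,\dots,e_n\}$ be an $h$-orthonormal basis of $T_pM^n$ such that $e_1$ maximizes $f(u)=h(K_uu,u)$ over the $h$-unit vectors $u\in T_pM^n$, $K_{e_1}e_i=\lambda_ie_i$ for all $i$, and $\lambda_1\ge2\lambda_i$ for $i\ge2$ (with $f(e_i)=0$ if $\lambda_1=2\lambda_i$). Then $$K_{e_1}e_1=\lambda_1e_1,\quad K_{e_1}e_i=\lambda_ie_i,\quad K_{e_i}e_j=\lambda_i\delta_{ij}e_1,\quad i,j=2,\dots,n.$$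
   Context: A centroaffine hypersurface is an immersion $x:M^n\to\mathbb{R}^{n+1}$ whose position vector is everywhere transversal to the tangent space; with $D$ the flat connection of $\mathbb{R}^{n+1}$, $D_Xx_*(Y)=x_*(\nabla_XY)+h(X,Y)(-\varepsilon x)$, $\varepsilon=\pm1$, defines the induced connection $\nabla$ and centroaffine metric $h$. Locally strongly convex means $h$ definite, and $\varepsilon$ is chosen so that $h$ is positive definite. $\hat\nabla$ is the Levi-Civita connection of $h$ and $K_XY=\nabla_XY-\hat\nabla_XY$ the difference tensor. *)

theory Defs
  imports "HOL-Analysis.Analysis"
begin

text \<open>Local chart model: the hypersurface is given on an open set U of real^'n
  (coordinates on M^n); tangent vectors at a point are elements of real^'n.\<close>

definition dd :: "('a::real_normed_vector \<Rightarrow> 'b::real_normed_vector) \<Rightarrow> 'a \<Rightarrow> 'a \<Rightarrow> 'b" where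
  "dd F v = (\<lambda>p. frechet_derivative F (at p) v)"

fun iter_dd :: "('a::real_normed_vector \<Rightarrow> 'b::real_normed_vector) \<Rightarrow> 'a list \<Rightarrow> 'a \<Rightarrow> 'b" where
  "iter_dd F [] = F"
| "iter_dd F (v # vs) = dd (iter_dd F vs) v"

definition smooth_on :: "'a::real_normed_vector set \<Rightarrow> ('a \<Rightarrow> 'b::real_normed_vector) \<Rightarrow> bool" where
  "smooth_on U F \<longleftrightarrow> (\<forall>vs. iter_dd F vs differentiable_on U)"

text \<open>Difference tensor K = nabla - hat nabla.\<close>
definition diffK :: "('a \<Rightarrow> 'a \<Rightarrow> 'a \<Rightarrow> 'a::real_vector) \<Rightarrow> ('a \<Rightarrow> 'a \<Rightarrow> 'a \<Rightarrow> 'a) \<Rightarrow> 'a \<Rightarrow> 'a \<Rightarrow> 'a \<Rightarrow> 'a" where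
  "diffK Gam Gh p X Y = Gam p X Y - Gh p X Y"

text \<open>(hat nabla_Z K)(X,Y) at p, computed with the constant (coordinate) extensions of X, Y.\<close>
definition covK :: "('a::real_normed_vector \<Rightarrow> 'a \<Rightarrow> 'a \<Rightarrow> 'a) \<Rightarrow> ('a \<Rightarrow> 'a \<Rightarrow> 'a \<Rightarrow> 'a) \<Rightarrow> 'a \<Rightarrow> 'a \<Rightarrow> 'a \<Rightarrow> 'a \<Rightarrow> 'a" where
  "covK Gam Gh p Z X Y =
     frechet_derivative (\<lambda>q. diffK Gam Gh q X Y) (at p) Z + Gh p Z (diffK Gam Gh p X Y)
     - diffK Gam Gh p (Gh p Z X) Y - diffK Gam Gh p X (Gh p Z Y)"

end

theory Submission
  imports Defs
begin

text \<open>In a chart the structure equation writes the second derivatives of \<open>x\<close> as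
  \<open>dx(\<nabla>\<^sub>XY) - \<epsilon> h(X,Y) x\<close>. By transversality, the symmetry of the second and third
  derivatives of \<open>x\<close> yields the symmetry and bilinearity of \<open>\<nabla>\<close> and \<open>h\<close>, the Gauss and
  Codazzi equations, and the total symmetry of the cubic form \<open>h(K(X,Y),Z)\<close>.
  Differentiating the hypothesis on the Levi-Civita derivative of \<open>K\<close> once more and alternating
  gives the Ricci identity \<open>R(W,Z)\<cdot>K = d\<mu>(W) S(Z,\<cdot>,\<cdot>) - d\<mu>(Z) S(W,\<cdot>,\<cdot>)\<close>, where
  \<open>S(Z,X,Y) = h(X,Y)Z + h(X,Z)Y + h(Y,Z)X\<close> and, by the Gauss equation, the Levi-Civita curvature is
  \<open>R(W,Z) = \<epsilon>(W h(Z,\<cdot>) - Z h(W,\<cdot>)) - [K\<^sub>W,K\<^sub>Z]\<close>.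
  Evaluated on the eigenframe of \<open>K\<^sub>e\<^sub>1\<close> it shows \<open>d\<mu> = d\<mu>(e\<^sub>1) h(e\<^sub>1,\<cdot>)\<close>, so
  \<open>d\<mu>(e\<^sub>1) \<noteq> 0\<close>, and \<open>(\<lambda>\<^sub>1 - 2\<lambda>\<^sub>i)(\<lambda>\<^sub>i(\<lambda>\<^sub>1 - \<lambda>\<^sub>i) - \<epsilon>) = d\<mu>(e\<^sub>1)\<close> for \<open>i \<ge> 2\<close>;
  two further instances then force \<open>h(K(e\<^sub>i,e\<^sub>j),e\<^sub>k) = 0\<close> for \<open>i, j, k \<ge> 2\<close>.\<close>

section \<open>Directional derivatives\<close>

lemma dd_eqI:
  assumes "(F has_derivative F') (at q)"
  shows "dd F v q = F' v"
  using frechet_derivative_at[OF assms] unfolding dd_def by simp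

lemma has_derivative_dd:
  assumes "F differentiable at q"
  shows "(F has_derivative (\<lambda>v. dd F v q)) (at q)"
  unfolding dd_def by (metis assms frechet_derivative_works)

lemma linear_dd:
  assumes "F differentiable at q"
  shows "linear (\<lambda>v. dd F v q)"
  using has_derivative_dd[OF assms] has_derivative_linear by blast

lemma dd_add:
  assumes "f differentiable at q" "g differentiable at q"
  shows "dd (\<lambda>r. f r + g r) v q = dd f v q + dd g v q"
  by (rule dd_eqI) (intro has_derivative_add has_derivative_dd assms)

lemma dd_diff:
  assumes "f differentiable at q" "g differentiable at q"
  shows "dd (\<lambda>r. f r - g r) v q = dd f v q - dd g v q"
  by (rule dd_eqI) (intro has_derivative_diff has_derivative_dd assms)

lemma dd_scaleR:
  fixes f :: "'a::real_normed_vector \<Rightarrow> real" and g :: "'a \<Rightarrow> 'b::real_normed_vector"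
  assumes "f differentiable at q" "g differentiable at q"
  shows "dd (\<lambda>r. f r *\<^sub>R g r) v q = f q *\<^sub>R dd g v q + dd f v q *\<^sub>R g q"
  by (rule dd_eqI) (intro has_derivative_scaleR has_derivative_dd assms)

lemma dd_inner_left:
  assumes "F differentiable at q"
  shows "dd (\<lambda>q. F q \<bullet> b) v q = dd F v q \<bullet> b"
    and "(\<lambda>q. F q \<bullet> b) differentiable at q"
  using dd_eqI[OF has_derivative_inner_left[OF has_derivative_dd[OF assms]]]
    has_derivative_inner_left[OF has_derivative_dd[OF assms]]
  by (auto simp: differentiable_def)

lemma differentiable_at_cong_open:
  assumes "open U" "p \<in> U" "\<And>q. q \<in> U \<Longrightarrow> f q = g q" "f differentiable at p"
  shows "g differentiable at p"
  using assms by (meson differentiable_def has_derivative_transform_within_open)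

lemma dd_cong_open:
  assumes "open U" "p \<in> U" "\<And>q. q \<in> U \<Longrightarrow> f q = g q" "f differentiable at p"
  shows "dd f v p = dd g v p"
  unfolding dd_def using frechet_derivative_transform_within_open[OF assms(4,1,2,3)] by simp

lemma continuous_at_cong_open:
  fixes f g :: "'a::metric_space \<Rightarrow> 'b::topological_space"
  assumes "open U" "p \<in> U" "\<And>q. q \<in> U \<Longrightarrow> f q = g q" "continuous (at p) f"
  shows "continuous (at p) g"
proof -
  obtain d where "d > 0" "ball p d \<subseteq> U" using assms(1,2) open_contains_ball by blast
  then show ?thesis
    using continuous_transform_within[of p UNIV f d g] assms(3,4)
    by (auto simp: dist_commute subset_iff)
qed

lemma linear_dd_family:
  fixes L :: "'a::real_normed_vector \<Rightarrow> 'c::real_normed_vector \<Rightarrow> 'b::real_normed_vector"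
  assumes "open U" "q \<in> U" "\<And>r. r \<in> U \<Longrightarrow> linear (L r)"
    and "\<And>c. (\<lambda>r. L r c) differentiable at q"
  shows "linear (\<lambda>c. dd (\<lambda>r. L r c) w q)"
proof (rule linearI)
  fix a b :: 'c and t :: real
  have "dd (\<lambda>r. L r (a + b)) w q = dd (\<lambda>r. L r a + L r b) w q"
    by (rule dd_cong_open[OF assms(1,2)]) (use linear_add[OF assms(3)] assms(4) in auto)
  then show "dd (\<lambda>r. L r (a + b)) w q = dd (\<lambda>r. L r a) w q + dd (\<lambda>r. L r b) w q"
    by (simp add: dd_add assms(4))
  have "dd (\<lambda>r. L r (t *\<^sub>R a)) w q = dd (\<lambda>r. t *\<^sub>R L r a) w q"
    by (rule dd_cong_open[OF assms(1,2)]) (use linear_scale[OF assms(3)] assms(4) in auto)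
  then show "dd (\<lambda>r. L r (t *\<^sub>R a)) w q = t *\<^sub>R dd (\<lambda>r. L r a) w q"
    using dd_eqI[OF has_derivative_scaleR_right[OF has_derivative_dd[OF assms(4)]]] by simp
qed

text \<open>Expanding \<open>V q\<close> in the basis reduces this product rule to finitely many scalar products.\<close>
lemma dd_apply_family:
  fixes L :: "'a::real_normed_vector \<Rightarrow> 'c::euclidean_space \<Rightarrow> 'b::real_normed_vector"
    and V :: "'a \<Rightarrow> 'c"
  assumes U: "open U" "p \<in> U" and lin: "\<And>q. q \<in> U \<Longrightarrow> linear (L q)"
    and dL: "\<And>c. (\<lambda>q. L q c) differentiable at p" and dV: "V differentiable at p"
  shows "dd (\<lambda>q. L q (V q)) w p = L p (dd V w p) + dd (\<lambda>q. L q (V p)) w p"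
    and "(\<lambda>q. L q (V q)) differentiable at p"
proof -
  have rep: "L q c = (\<Sum>i\<in>Basis. (c \<bullet> i) *\<^sub>R L q i)" if "q \<in> U" for q c
  proof -
    have "L q c = L q (\<Sum>i\<in>Basis. (c \<bullet> i) *\<^sub>R i)" by (simp add: euclidean_representation)
    also have "\<dots> = (\<Sum>i\<in>Basis. (c \<bullet> i) *\<^sub>R L q i)"
      by (simp add: linear_sum[OF lin[OF that]] linear_scale[OF lin[OF that]])
    finally show ?thesis .
  qed
  have dLV: "((\<lambda>q. \<Sum>i\<in>Basis. (V q \<bullet> i) *\<^sub>R L q i) has_derivative
      (\<lambda>w. \<Sum>i\<in>Basis. (V p \<bullet> i) *\<^sub>R dd (\<lambda>q. L q i) w p + (dd V w p \<bullet> i) *\<^sub>R L p i)) (at p)"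
    by (intro has_derivative_sum has_derivative_scaleR has_derivative_inner_left has_derivative_dd dV dL)
  have dLc: "((\<lambda>q. \<Sum>i\<in>Basis. (V p \<bullet> i) *\<^sub>R L q i) has_derivative
      (\<lambda>w. \<Sum>i\<in>Basis. (V p \<bullet> i) *\<^sub>R dd (\<lambda>q. L q i) w p)) (at p)"
    by (intro has_derivative_sum has_derivative_scaleR_right has_derivative_dd dL)
  have dLV': "((\<lambda>q. L q (V q)) has_derivative
      (\<lambda>w. \<Sum>i\<in>Basis. (V p \<bullet> i) *\<^sub>R dd (\<lambda>q. L q i) w p + (dd V w p \<bullet> i) *\<^sub>R L p i)) (at p)"
    using has_derivative_transform_within_open[OF dLV U, of "\<lambda>q. L q (V q)"] rep by metis
  then show "(\<lambda>q. L q (V q)) differentiable at p"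
    by (auto simp: differentiable_def)
  have dLc': "((\<lambda>q. L q (V p)) has_derivative
      (\<lambda>w. \<Sum>i\<in>Basis. (V p \<bullet> i) *\<^sub>R dd (\<lambda>q. L q i) w p)) (at p)"
    using has_derivative_transform_within_open[OF dLc U, of "\<lambda>q. L q (V p)"] rep by metis
  show "dd (\<lambda>q. L q (V q)) w p = L p (dd V w p) + dd (\<lambda>q. L q (V p)) w p"
    unfolding dd_eqI[OF dLV'] dd_eqI[OF dLc'] rep[OF U(2), of "dd V w p"]
    by (simp add: sum.distrib)
qed

lemma iter_dd_append: "iter_dd (dd F v) vs = iter_dd F (vs @ [v])"
  by (induction vs) auto

lemma smooth_on_differentiable_at:
  assumes "smooth_on U F" "open U" "q \<in> U"
  shows "F differentiable at q"
  using assms iter_dd.simps(1)[of F] unfolding smooth_on_def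
  by (metis differentiable_on_eq_differentiable_at)

lemma smooth_on_dd:
  assumes "smooth_on U F"
  shows "smooth_on U (dd F v)"
  using assms unfolding smooth_on_def iter_dd_append by blast

lemma smooth_on_diff:
  fixes f g :: "'a::real_normed_vector \<Rightarrow> 'b::real_normed_vector"
  assumes f: "smooth_on U f" and g: "smooth_on U g" and U: "open U"
  shows "smooth_on U (\<lambda>q. f q - g q)"
proof -
  have diff: "iter_dd f vs differentiable at q" "iter_dd g vs differentiable at q" if "q \<in> U" for vs q
    using f g that U unfolding smooth_on_def by (auto simp: differentiable_on_eq_differentiable_at)
  have eq: "\<forall>q\<in>U. iter_dd (\<lambda>q. f q - g q) vs q = iter_dd f vs q - iter_dd g vs q" for vs
  proof (induction vs)
    case (Cons v vs)
    show ?case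
    proof
      fix q assume q: "q \<in> U"
      have "dd (\<lambda>r. iter_dd f vs r - iter_dd g vs r) v q = dd (iter_dd (\<lambda>q. f q - g q) vs) v q"
        by (rule dd_cong_open[OF U q]) (use Cons diff q in auto)
      then show "iter_dd (\<lambda>q. f q - g q) (v # vs) q = iter_dd f (v # vs) q - iter_dd g (v # vs) q"
        using dd_diff[OF diff[OF q]] by simp
    qed
  qed simp
  show ?thesis
    unfolding smooth_on_def differentiable_on_eq_differentiable_at[OF U]
    using differentiable_at_cong_open[OF U _ _ differentiable_diff[OF diff]] eq by metis
qed

section \<open>Symmetry of second derivatives\<close>

lemma has_derivative_along_line:
  fixes G :: "'a::real_normed_vector \<Rightarrow> 'b::real_normed_vector"
  assumes "G differentiable at (c + u *\<^sub>R v)"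
  shows "((\<lambda>u. G (c + u *\<^sub>R v)) has_derivative (\<lambda>t. t *\<^sub>R dd G v (c + u *\<^sub>R v))) (at u within S)"
proof -
  have "((\<lambda>u. c + u *\<^sub>R v) has_derivative (\<lambda>t. t *\<^sub>R v)) (at u within S)"
    by (auto intro!: derivative_eq_intros)
  from diff_chain_within[OF this has_derivative_at_withinI[OF has_derivative_dd[OF assms]]]
  show ?thesis
    by (simp add: o_def linear_scale[OF linear_dd[OF assms]])
qed

lemma second_difference_mean_value:
  fixes G :: "'a::real_normed_vector \<Rightarrow> real"
  assumes s: "s \<ge> 0"
    and inU: "\<And>a b. a \<in> {0..s} \<Longrightarrow> b \<in> {0..s} \<Longrightarrow> p + a *\<^sub>R v + b *\<^sub>R w \<in> U"
    and dG: "\<And>q. q \<in> U \<Longrightarrow> G differentiable at q"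
    and dGv: "\<And>q. q \<in> U \<Longrightarrow> dd G v differentiable at q"
  shows "\<exists>a\<in>{0..s}. \<exists>b\<in>{0..s}. G (p + s *\<^sub>R v + s *\<^sub>R w) - G (p + s *\<^sub>R v) - G (p + s *\<^sub>R w) + G p
          = s * s * dd (dd G v) w (p + a *\<^sub>R v + b *\<^sub>R w)"
proof -
  define g where "g u = G ((p + s *\<^sub>R w) + u *\<^sub>R v) - G (p + u *\<^sub>R v)" for u
  have "\<exists>a\<in>{0..s}. g s - g 0 = (\<lambda>t. t * (dd G v ((p + s *\<^sub>R w) + a *\<^sub>R v) - dd G v (p + a *\<^sub>R v))) (s - 0)"
  proof (rule mvt_very_simple[OF s])
    fix u assume u: "0 \<le> u" "u \<le> s"
    have "G differentiable at ((p + s *\<^sub>R w) + u *\<^sub>R v)" "G differentiable at (p + u *\<^sub>R v)"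
      using dG inU[of u s] inU[of u 0] u s by (simp_all add: algebra_simps)
    from has_derivative_diff[OF has_derivative_along_line[OF this(1)] has_derivative_along_line[OF this(2)]]
    show "(g has_derivative (\<lambda>t. t * (dd G v ((p + s *\<^sub>R w) + u *\<^sub>R v) - dd G v (p + u *\<^sub>R v))))
        (at u within {0..s})"
      unfolding g_def by (simp add: right_diff_distrib)
  qed
  then obtain a where a: "a \<in> {0..s}"
    and ga: "g s - g 0 = s * (dd G v ((p + s *\<^sub>R w) + a *\<^sub>R v) - dd G v (p + a *\<^sub>R v))"
    by auto
  define k where "k t = dd G v ((p + a *\<^sub>R v) + t *\<^sub>R w)" for t
  have "\<exists>b\<in>{0..s}. k s - k 0 = (\<lambda>t. t * dd (dd G v) w ((p + a *\<^sub>R v) + b *\<^sub>R w)) (s - 0)"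
  proof (rule mvt_very_simple[OF s])
    fix u assume u: "0 \<le> u" "u \<le> s"
    have "dd G v differentiable at ((p + a *\<^sub>R v) + u *\<^sub>R w)"
      using dGv inU[of a u] u a by (simp add: algebra_simps)
    from has_derivative_along_line[OF this]
    show "(k has_derivative (\<lambda>t. t * dd (dd G v) w ((p + a *\<^sub>R v) + u *\<^sub>R w))) (at u within {0..s})"
      unfolding k_def by simp
  qed
  then obtain b where b: "b \<in> {0..s}"
    and kb: "k s - k 0 = s * dd (dd G v) w ((p + a *\<^sub>R v) + b *\<^sub>R w)"
    by auto
  have "G (p + s *\<^sub>R v + s *\<^sub>R w) - G (p + s *\<^sub>R v) - G (p + s *\<^sub>R w) + G p = g s - g 0"
    unfolding g_def by (simp add: add.commute add.left_commute)
  also have "\<dots> = s * (k s - k 0)"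
    unfolding ga k_def by (simp add: add.commute add.left_commute)
  also have "\<dots> = s * s * dd (dd G v) w (p + a *\<^sub>R v + b *\<^sub>R w)"
    unfolding kb by simp
  finally show ?thesis using a b by blast
qed

lemma small_rectangle:
  fixes p v w :: "'a::real_normed_vector"
  assumes "d > 0"
  obtains s where "s > 0" "\<And>a b. a \<in> {0..s} \<Longrightarrow> b \<in> {0..s} \<Longrightarrow> dist (p + a *\<^sub>R v + b *\<^sub>R w) p < d"
proof
  define s where "s = d / (norm v + norm w + 1)"
  have pos: "norm v + norm w + 1 > 0" by (smt (verit) norm_ge_zero)
  show "s > 0" using assms pos by (simp add: s_def)
  fix a b assume ab: "a \<in> {0..s}" "b \<in> {0..s}"
  have "dist (p + a *\<^sub>R v + b *\<^sub>R w) p \<le> a * norm v + b * norm w"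
    using norm_triangle_ineq[of "a *\<^sub>R v" "b *\<^sub>R w"] ab by (simp add: dist_norm)
  also have "\<dots> \<le> s * (norm v + norm w)"
    using ab by (simp add: distrib_left add_mono mult_right_mono)
  also have "\<dots> < s * (norm v + norm w + 1)"
    using \<open>s > 0\<close> by simp
  also have "\<dots> = d" using pos by (simp add: s_def)
  finally show "dist (p + a *\<^sub>R v + b *\<^sub>R w) p < d" .
qed

lemma mixed_partials_meet:
  fixes G :: "'a::real_normed_vector \<Rightarrow> real"
  assumes s: "s > 0"
    and inU: "\<And>a b. a \<in> {0..s} \<Longrightarrow> b \<in> {0..s} \<Longrightarrow> p + a *\<^sub>R v + b *\<^sub>R w \<in> U"
    and dG: "\<And>q. q \<in> U \<Longrightarrow> G differentiable at q"
    and dGv: "\<And>q. q \<in> U \<Longrightarrow> dd G v differentiable at q"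
    and dGw: "\<And>q. q \<in> U \<Longrightarrow> dd G w differentiable at q"
  obtains a b a' b' where "a \<in> {0..s}" "b \<in> {0..s}" "a' \<in> {0..s}" "b' \<in> {0..s}"
    and "dd (dd G v) w (p + a *\<^sub>R v + b *\<^sub>R w) = dd (dd G w) v (p + b' *\<^sub>R v + a' *\<^sub>R w)"
proof -
  have swap: "p + a *\<^sub>R w + b *\<^sub>R v = p + b *\<^sub>R v + a *\<^sub>R w" for a b
    by (simp add: algebra_simps)
  obtain a b where ab: "a \<in> {0..s}" "b \<in> {0..s}"
    and r1: "G (p + s *\<^sub>R v + s *\<^sub>R w) - G (p + s *\<^sub>R v) - G (p + s *\<^sub>R w) + G p
          = s * s * dd (dd G v) w (p + a *\<^sub>R v + b *\<^sub>R w)"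
    using second_difference_mean_value[of s p v w U G] s inU dG dGv by auto
  obtain a' b' where ab': "a' \<in> {0..s}" "b' \<in> {0..s}"
    and r2: "G (p + s *\<^sub>R v + s *\<^sub>R w) - G (p + s *\<^sub>R w) - G (p + s *\<^sub>R v) + G p
          = s * s * dd (dd G w) v (p + b' *\<^sub>R v + a' *\<^sub>R w)"
    using second_difference_mean_value[of s p w v U G] s inU dG dGw unfolding swap by auto
  have "s * s * dd (dd G v) w (p + a *\<^sub>R v + b *\<^sub>R w) = s * s * dd (dd G w) v (p + b' *\<^sub>R v + a' *\<^sub>R w)"
    using r1 r2 by linarith
  then show ?thesis using that ab ab' s by simp
qed

lemma dd_commute_real:
  fixes G :: "'a::real_normed_vector \<Rightarrow> real"
  assumes U: "open U" "p \<in> U"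
    and dG: "\<And>q. q \<in> U \<Longrightarrow> G differentiable at q"
    and dGv: "\<And>q. q \<in> U \<Longrightarrow> dd G v differentiable at q"
    and dGw: "\<And>q. q \<in> U \<Longrightarrow> dd G w differentiable at q"
    and cv: "continuous (at p) (dd (dd G v) w)"
    and cw: "continuous (at p) (dd (dd G w) v)"
  shows "dd (dd G v) w p = dd (dd G w) v p"
proof (rule ccontr)
  let ?A = "dd (dd G v) w p" and ?B = "dd (dd G w) v p"
  assume "?A \<noteq> ?B"
  then have e: "\<bar>?A - ?B\<bar> / 2 > 0" by simp
  obtain d1 where d1: "d1 > 0" "\<And>q. dist q p < d1 \<Longrightarrow> dist (dd (dd G v) w q) ?A < \<bar>?A - ?B\<bar> / 2"
    using cv e unfolding continuous_at_eps_delta by meson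
  obtain d2 where d2: "d2 > 0" "\<And>q. dist q p < d2 \<Longrightarrow> dist (dd (dd G w) v q) ?B < \<bar>?A - ?B\<bar> / 2"
    using cw e unfolding continuous_at_eps_delta by meson
  obtain d3 where d3: "d3 > 0" "ball p d3 \<subseteq> U"
    using openE[OF U] by blast
  have "min d1 (min d2 d3) > 0" using d1 d2 d3 by simp
  then obtain s where s: "s > 0"
    and close: "\<And>a b. a \<in> {0..s} \<Longrightarrow> b \<in> {0..s} \<Longrightarrow> dist (p + a *\<^sub>R v + b *\<^sub>R w) p < min d1 (min d2 d3)"
    using small_rectangle by blast
  have "p + a *\<^sub>R v + b *\<^sub>R w \<in> U" if "a \<in> {0..s}" "b \<in> {0..s}" for a b
    using close[OF that] d3 by (auto simp: dist_commute)
  then obtain a b a' b' where ab: "a \<in> {0..s}" "b \<in> {0..s}" "a' \<in> {0..s}" "b' \<in> {0..s}"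
    and meet: "dd (dd G v) w (p + a *\<^sub>R v + b *\<^sub>R w) = dd (dd G w) v (p + b' *\<^sub>R v + a' *\<^sub>R w)"
    using mixed_partials_meet[OF s _ dG dGv dGw] by metis
  have "dist (dd (dd G v) w (p + a *\<^sub>R v + b *\<^sub>R w)) ?A < \<bar>?A - ?B\<bar> / 2"
    "dist (dd (dd G w) v (p + b' *\<^sub>R v + a' *\<^sub>R w)) ?B < \<bar>?A - ?B\<bar> / 2"
    using d1(2) d2(2) close[OF ab(1,2)] close[OF ab(4,3)] by simp_all
  with meet show False
    by (simp add: dist_real_def) (smt (verit))
qed

lemma dd_commute:
  fixes F :: "'a::real_normed_vector \<Rightarrow> 'b::euclidean_space"
  assumes U: "open U" "p \<in> U"
    and dF: "\<And>q. q \<in> U \<Longrightarrow> F differentiable at q"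
    and dFv: "\<And>q. q \<in> U \<Longrightarrow> dd F v differentiable at q"
    and dFw: "\<And>q. q \<in> U \<Longrightarrow> dd F w differentiable at q"
    and cv: "continuous (at p) (dd (dd F v) w)"
    and cw: "continuous (at p) (dd (dd F w) v)"
  shows "dd (dd F v) w p = dd (dd F w) v p"
proof (rule euclidean_eqI)
  fix b :: 'b
  define G where "G q = F q \<bullet> b" for q
  have dG: "G differentiable at q" "dd G u q = dd F u q \<bullet> b" if "q \<in> U" for u q
    unfolding G_def using dd_inner_left[OF dF[OF that]] by auto
  have dG2: "dd G u differentiable at q" "dd (dd G u) u' q = dd (dd F u) u' q \<bullet> b"
    if "q \<in> U" "\<And>q. q \<in> U \<Longrightarrow> dd F u differentiable at q" for u u' q
  proof -
    have eq: "\<And>r. r \<in> U \<Longrightarrow> dd F u r \<bullet> b = dd G u r" using dG by simp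
    show "dd G u differentiable at q"
      using differentiable_at_cong_open[OF U(1) that(1), of "\<lambda>r. dd F u r \<bullet> b"] eq
        dd_inner_left(2)[OF that(2)[OF that(1)]] by blast
    show "dd (dd G u) u' q = dd (dd F u) u' q \<bullet> b"
      using dd_cong_open[OF U(1) that(1), of "\<lambda>r. dd F u r \<bullet> b" "dd G u" u'] eq
        dd_inner_left[OF that(2)[OF that(1)]] by simp
  qed
  have "continuous (at p) (dd (dd G v) w)" "continuous (at p) (dd (dd G w) v)"
    using continuous_at_cong_open[OF U, of "\<lambda>q. dd (dd F v) w q \<bullet> b"]
      continuous_at_cong_open[OF U, of "\<lambda>q. dd (dd F w) v q \<bullet> b"] dG2 dFv dFw cv cw
    by (auto intro: continuous_intros)
  with dd_commute_real[OF U] dG dG2 dFv dFw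
  have "dd (dd G v) w p = dd (dd G w) v p" by blast
  then show "dd (dd F v) w p \<bullet> b = dd (dd F w) v p \<bullet> b"
    using dG2[OF U(2)] dFv dFw by simp
qed

lemma smooth_on_dd_commute:
  fixes F :: "'a::real_normed_vector \<Rightarrow> 'b::euclidean_space"
  assumes "smooth_on U F" "open U" "p \<in> U"
  shows "dd (dd F v) w p = dd (dd F w) v p"
  by (rule dd_commute[OF assms(2,3)])
    (use smooth_on_differentiable_at smooth_on_dd assms differentiable_imp_continuous_within in blast)+

lemma bilinear_of_linear_left_commute:
  assumes "\<And>y. linear (\<lambda>x. f x y)" and "\<And>x y. f x y = f y x"
  shows "bilinear f"
  unfolding bilinear_def using assms by (metis (no_types, lifting) ext)

lemma independent_orthonormal_family:
  fixes g :: "'a::real_vector \<Rightarrow> 'a \<Rightarrow> real"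
  assumes g: "bilinear g"
    and orth: "\<And>i j. i \<in> I \<Longrightarrow> j \<in> I \<Longrightarrow> g (e i) (e j) = (if i = j then 1 else 0)"
  shows "inj_on e I" and "independent (e ` I)"
proof -
  show inj: "inj_on e I"
    by (rule inj_onI) (use orth in \<open>metis zero_neq_one\<close>)
  have lin: "linear (\<lambda>x. g x c)" for c
    using g unfolding bilinear_def by blast
  show "independent (e ` I)"
    unfolding dependent_explicit not_ex
  proof (intro allI notI, elim conjE bexE)
    fix T u w
    assume T: "finite T" "T \<subseteq> e ` I" and s: "(\<Sum>v\<in>T. u v *\<^sub>R v) = 0"
      and w: "w \<in> T" and uw: "u w \<noteq> 0"
    have "g (\<Sum>v\<in>T. u v *\<^sub>R v) w = (\<Sum>v\<in>T. u v * g v w)"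
      by (simp add: linear_sum[OF lin] linear_scale[OF lin])
    also have "\<dots> = (\<Sum>v\<in>T. if v = w then u v else 0)"
    proof (rule sum.cong)
      fix v assume "v \<in> T"
      then obtain i j where "i \<in> I" "v = e i" "j \<in> I" "w = e j"
        using T w by blast
      then show "u v * g v w = (if v = w then u v else 0)"
        using orth inj_onD[OF inj] by auto
    qed simp
    also have "\<dots> = u w" using w T by (simp add: sum.delta')
    finally show False using s uw bilinear_lzero[OF g] by simp
  qed
qed

lemma orthonormal_expansion:
  fixes g :: "'a::euclidean_space \<Rightarrow> 'a \<Rightarrow> real"
  assumes g: "bilinear g" and pos: "\<And>v. v \<noteq> 0 \<Longrightarrow> g v v > 0"
    and I: "finite I" "card I = DIM('a)"
    and orth: "\<And>i j. i \<in> I \<Longrightarrow> j \<in> I \<Longrightarrow> g (e i) (e j) = (if i = j then 1 else 0)"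
  shows "v = (\<Sum>k\<in>I. g v (e k) *\<^sub>R e k)"
proof -
  have span: "UNIV \<subseteq> span (e ` I)"
    using independent_orthonormal_family[OF g orth] I
    by (intro card_ge_dim_independent) (simp_all add: card_image)
  have lin: "linear (\<lambda>x. g x c)" for c
    using g unfolding bilinear_def by blast
  define w where "w = v - (\<Sum>k\<in>I. g v (e k) *\<^sub>R e k)"
  have "g w (e j) = 0" if "j \<in> I" for j
  proof -
    have "g w (e j) = g v (e j) - (\<Sum>k\<in>I. g v (e k) * g (e k) (e j))"
      unfolding w_def bilinear_lsub[OF g] linear_sum[OF lin]
      by (simp add: bilinear_lmul[OF g])
    also have "(\<Sum>k\<in>I. g v (e k) * g (e k) (e j)) = (\<Sum>k\<in>I. if k = j then g v (e k) else 0)"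
      by (rule sum.cong) (use that orth in auto)
    also have "\<dots> = g v (e j)"
      using that I by (simp add: sum.delta')
    finally show ?thesis by simp
  qed
  then have "g w w = 0"
    using linear_eq_0_on_span[of "g w" "e ` I" w] g span unfolding bilinear_def by blast
  then have "w = 0" using pos by force
  then show ?thesis unfolding w_def by simp
qed

section \<open>Centroaffine hypersurfaces in a chart\<close>

locale centroaffine_chart =
  fixes U :: "(real^'n) set"
    and x :: "real^'n \<Rightarrow> real^'m"
    and eps :: real
    and h :: "real^'n \<Rightarrow> real^'n \<Rightarrow> real^'n \<Rightarrow> real"
    and Gam Gh :: "real^'n \<Rightarrow> real^'n \<Rightarrow> real^'n \<Rightarrow> real^'n"
  assumes U_open: "open U"
    and x_smooth: "smooth_on U x"
    and transversal: "\<And>q v c. q \<in> U \<Longrightarrow>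
        frechet_derivative x (at q) v + c *\<^sub>R x q = 0 \<Longrightarrow> v = 0 \<and> c = 0"
    and eps_pm: "eps = 1 \<or> eps = -1"
    and structure_eq: "\<And>q X Y. q \<in> U \<Longrightarrow>
        frechet_derivative (\<lambda>r. frechet_derivative x (at r) Y) (at q) X
          = frechet_derivative x (at q) (Gam q X Y) + h q X Y *\<^sub>R (- eps *\<^sub>R x q)"
    and h_smooth: "\<And>X Y. smooth_on U (\<lambda>q. h q X Y)"
    and Gam_smooth: "\<And>X Y. smooth_on U (\<lambda>q. Gam q X Y)"
    and Gh_smooth: "\<And>X Y. smooth_on U (\<lambda>q. Gh q X Y)"
    and h_posdef: "\<And>q X. q \<in> U \<Longrightarrow> X \<noteq> 0 \<Longrightarrow> h q X X > 0"
    and LC_torsionfree: "\<And>q X Y. q \<in> U \<Longrightarrow> Gh q X Y = Gh q Y X"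
    and LC_metric: "\<And>q X Y Z. q \<in> U \<Longrightarrow>
        frechet_derivative (\<lambda>r. h r X Y) (at q) Z = h q (Gh q Z X) Y + h q X (Gh q Z Y)"
begin

abbreviation K :: "real^'n \<Rightarrow> real^'n \<Rightarrow> real^'n \<Rightarrow> real^'n" where
  "K \<equiv> diffK Gam Gh"

lemma differentiable_x: "q \<in> U \<Longrightarrow> x differentiable at q"
  using smooth_on_differentiable_at[OF x_smooth U_open] .

lemma differentiable_dd_x: "q \<in> U \<Longrightarrow> dd x Y differentiable at q"
  using smooth_on_differentiable_at[OF smooth_on_dd[OF x_smooth] U_open] .

lemma differentiable_h: "q \<in> U \<Longrightarrow> (\<lambda>r. h r X Y) differentiable at q"
  using smooth_on_differentiable_at[OF h_smooth U_open] .

lemma differentiable_Gam: "q \<in> U \<Longrightarrow> (\<lambda>r. Gam r X Y) differentiable at q"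
  using smooth_on_differentiable_at[OF Gam_smooth U_open] .

lemma differentiable_Gh: "q \<in> U \<Longrightarrow> (\<lambda>r. Gh r X Y) differentiable at q"
  using smooth_on_differentiable_at[OF Gh_smooth U_open] .

lemma dd_h: "q \<in> U \<Longrightarrow> dd (\<lambda>r. h r X Y) Z q = h q (Gh q Z X) Y + h q X (Gh q Z Y)"
  using LC_metric unfolding dd_def by simp

lemma dd_x_decomposition_unique:
  assumes q: "q \<in> U" and eq: "dd x A q + c *\<^sub>R x q = dd x B q + d *\<^sub>R x q"
  shows "A = B \<and> c = d"
proof -
  have "dd x (A - B) q + (c - d) *\<^sub>R x q = (dd x A q + c *\<^sub>R x q) - (dd x B q + d *\<^sub>R x q)"
    using linear_diff[OF linear_dd[OF differentiable_x[OF q]]] by (simp add: algebra_simps)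
  then have "dd x (A - B) q + (c - d) *\<^sub>R x q = 0"
    using eq by simp
  from transversal[OF q this[unfolded dd_def]] show ?thesis by simp
qed

lemma dd_dd_x: "q \<in> U \<Longrightarrow> dd (dd x Y) X q = dd x (Gam q X Y) q - (eps * h q X Y) *\<^sub>R x q"
  using structure_eq unfolding dd_def by simp

lemma dd_dd_xD:
  assumes q: "q \<in> U" and eq: "dd (dd x Y) X q = dd x A q - (eps * c) *\<^sub>R x q"
  shows "Gam q X Y = A \<and> h q X Y = c"
  using dd_x_decomposition_unique[OF q, of "Gam q X Y" "- (eps * h q X Y)" A "- (eps * c)"]
    eq dd_dd_x[OF q] eps_pm by auto

lemma Gam_commute: "q \<in> U \<Longrightarrow> Gam q X Y = Gam q Y X"
  and h_commute: "q \<in> U \<Longrightarrow> h q X Y = h q Y X"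
  using dd_dd_xD[OF _ trans[OF smooth_on_dd_commute[OF x_smooth U_open] dd_dd_x]] by auto

lemma linear_Gam_h_left:
  assumes q: "q \<in> U"
  shows "linear (\<lambda>X. Gam q X Y)" and "linear (\<lambda>X. h q X Y)"
proof -
  note lin_x = linear_dd[OF differentiable_x[OF q]]
  note lin_xx = linear_dd[OF differentiable_dd_x[OF q, of Y]]
  have add: "Gam q (X1 + X2) Y = Gam q X1 Y + Gam q X2 Y \<and> h q (X1 + X2) Y = h q X1 Y + h q X2 Y" for X1 X2
  proof (rule dd_dd_xD[OF q])
    have "dd (dd x Y) (X1 + X2) q = dd (dd x Y) X1 q + dd (dd x Y) X2 q"
      using linear_add[OF lin_xx] by simp
    then show "dd (dd x Y) (X1 + X2) q
        = dd x (Gam q X1 Y + Gam q X2 Y) q - (eps * (h q X1 Y + h q X2 Y)) *\<^sub>R x q"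
      by (simp add: dd_dd_x[OF q] linear_add[OF lin_x] algebra_simps)
  qed
  have scale: "Gam q (t *\<^sub>R X) Y = t *\<^sub>R Gam q X Y \<and> h q (t *\<^sub>R X) Y = t * h q X Y" for t X
  proof (rule dd_dd_xD[OF q])
    have "dd (dd x Y) (t *\<^sub>R X) q = t *\<^sub>R dd (dd x Y) X q"
      using linear_scale[OF lin_xx] by simp
    then show "dd (dd x Y) (t *\<^sub>R X) q = dd x (t *\<^sub>R Gam q X Y) q - (eps * (t * h q X Y)) *\<^sub>R x q"
      by (simp add: dd_dd_x[OF q] linear_scale[OF lin_x] algebra_simps)
  qed
  show "linear (\<lambda>X. Gam q X Y)" "linear (\<lambda>X. h q X Y)"
    using add scale by (auto intro: linearI)
qed

lemma bilinear_Gam: "q \<in> U \<Longrightarrow> bilinear (Gam q)"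
  and bilinear_h: "q \<in> U \<Longrightarrow> bilinear (h q)"
  using bilinear_of_linear_left_commute linear_Gam_h_left Gam_commute h_commute by metis+

lemma h_eqI:
  assumes q: "q \<in> U" and eq: "\<And>Z. h q u Z = h q v Z"
  shows "u = v"
proof (rule ccontr)
  assume "u \<noteq> v"
  then have "h q (u - v) (u - v) > 0" using h_posdef[OF q] by simp
  then show False using eq bilinear_lsub[OF bilinear_h[OF q]] by simp
qed

lemma linear_if_h_linear:
  assumes q: "q \<in> U" and lin: "\<And>Z. linear (\<lambda>X. h q (f X) Z)"
  shows "linear f"
proof (rule linearI)
  note hb = bilinear_h[OF q]
  show "f (a + b) = f a + f b" for a b
    by (rule h_eqI[OF q]) (simp add: linear_add[OF lin] bilinear_ladd[OF hb])
  show "f (t *\<^sub>R a) = t *\<^sub>R f a" for t a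
    by (rule h_eqI[OF q]) (simp add: linear_scale[OF lin] bilinear_lmul[OF hb])
qed

lemma koszul_formula:
  "q \<in> U \<Longrightarrow> 2 * h q (Gh q X Y) Z
    = dd (\<lambda>r. h r Y Z) X q + dd (\<lambda>r. h r X Z) Y q - dd (\<lambda>r. h r X Y) Z q"
  unfolding dd_h by (simp add: h_commute[of q "Gh q X Z"] h_commute[of q "Gh q Y Z"]
      LC_torsionfree[of q Z] LC_torsionfree[of q X Y])

lemma linear_dd_h_left: "q \<in> U \<Longrightarrow> linear (\<lambda>X. dd (\<lambda>r. h r X Y) Z q)"
  using linear_dd_family[OF U_open _ linear_Gam_h_left(2) differentiable_h] by blast

lemma bilinear_Gh: "q \<in> U \<Longrightarrow> bilinear (Gh q)"
proof (rule bilinear_of_linear_left_commute)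
  assume q: "q \<in> U"
  have "linear (\<lambda>X. inverse 2 *\<^sub>R
      (dd (\<lambda>r. h r Y Z) X q + dd (\<lambda>r. h r X Z) Y q - dd (\<lambda>r. h r X Y) Z q))" for Y Z
    by (intro linear_compose_scale_right linear_compose_sub linear_compose_add linear_dd
        differentiable_h q linear_dd_h_left)
  moreover have "(\<lambda>X. h q (Gh q X Y) Z) = (\<lambda>X. inverse 2 *\<^sub>R
      (dd (\<lambda>r. h r Y Z) X q + dd (\<lambda>r. h r X Z) Y q - dd (\<lambda>r. h r X Y) Z q))" for Y Z
    by (simp add: koszul_formula[OF q, symmetric])
  ultimately show "linear (\<lambda>X. Gh q X Y)" for Y
    by (intro linear_if_h_linear[OF q]) metis
  show "Gh q X Y = Gh q Y X" for X Y using LC_torsionfree[OF q] .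
qed

lemma K_commute: "q \<in> U \<Longrightarrow> K q X Y = K q Y X"
  by (simp add: diffK_def Gam_commute LC_torsionfree)

lemma bilinear_K:
  assumes q: "q \<in> U"
  shows "bilinear (K q)"
proof (rule bilinear_of_linear_left_commute)
  show "linear (\<lambda>X. K q X Y)" for Y
    unfolding diffK_def using bilinear_Gam[OF q] bilinear_Gh[OF q]
    by (intro linear_compose_sub) (auto simp: bilinear_def)
  show "K q X Y = K q Y X" for X Y
    using K_commute[OF q] .
qed

lemma smooth_on_K: "smooth_on U (\<lambda>q. K q X Y)"
  unfolding diffK_def using smooth_on_diff[OF Gam_smooth Gh_smooth U_open] .

lemma differentiable_K: "q \<in> U \<Longrightarrow> (\<lambda>r. K r X Y) differentiable at q"
  using smooth_on_differentiable_at[OF smooth_on_K U_open] .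

lemma dd_dd_dd_x:
  assumes q: "q \<in> U"
  shows "dd (dd (dd x Y) Z) W q
    = dd x (dd (\<lambda>r. Gam r Z Y) W q + Gam q W (Gam q Z Y) - (eps * h q Z Y) *\<^sub>R W) q
      - (eps * (h q W (Gam q Z Y) + dd (\<lambda>r. h r Z Y) W q)) *\<^sub>R x q"
proof -
  have lin_x: "\<And>r. r \<in> U \<Longrightarrow> linear (\<lambda>v. dd x v r)"
    using linear_dd differentiable_x by blast
  have dx: "(\<lambda>r. dd x v r) differentiable at q" for v
    using differentiable_dd_x[OF q] unfolding dd_def .
  have deps_h: "(\<lambda>r. eps * h r Z Y) differentiable at q"
    using differentiable_h[OF q] by simp
  note app = dd_apply_family[OF U_open q lin_x dx differentiable_Gam[OF q, of Z Y]]
  have "dd (dd (dd x Y) Z) W q = dd (\<lambda>r. dd x (Gam r Z Y) r - (eps * h r Z Y) *\<^sub>R x r) W q"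
    by (rule dd_cong_open[OF U_open q])
      (simp_all add: dd_dd_x smooth_on_differentiable_at[OF smooth_on_dd[OF smooth_on_dd[OF x_smooth]] U_open q])
  also have "\<dots> = dd (\<lambda>r. dd x (Gam r Z Y) r) W q - dd (\<lambda>r. (eps * h r Z Y) *\<^sub>R x r) W q"
    by (rule dd_diff) (use app(2) differentiable_scaleR[OF deps_h differentiable_x[OF q]] in auto)
  also have "dd (\<lambda>r. dd x (Gam r Z Y) r) W q
      = dd x (dd (\<lambda>r. Gam r Z Y) W q) q + dd x (Gam q W (Gam q Z Y)) q - (eps * h q W (Gam q Z Y)) *\<^sub>R x q"
    using app(1)[of W] dd_dd_x[OF q, of "Gam q Z Y" W] unfolding dd_def by simp
  also have "dd (\<lambda>r. (eps * h r Z Y) *\<^sub>R x r) W q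
      = (eps * h q Z Y) *\<^sub>R dd x W q + (eps * dd (\<lambda>r. h r Z Y) W q) *\<^sub>R x q"
    using dd_scaleR[OF deps_h differentiable_x[OF q]]
      dd_eqI[OF has_derivative_mult_right[OF has_derivative_dd[OF differentiable_h[OF q]]]] by simp
  finally show ?thesis
    by (simp add: linear_add[OF lin_x[OF q]] linear_diff[OF lin_x[OF q]] linear_scale[OF lin_x[OF q]]
        algebra_simps)
qed

lemma gauss_codazzi:
  assumes q: "q \<in> U"
  shows "dd (\<lambda>r. Gam r Z Y) W q + Gam q W (Gam q Z Y) - (eps * h q Z Y) *\<^sub>R W
       = dd (\<lambda>r. Gam r W Y) Z q + Gam q Z (Gam q W Y) - (eps * h q W Y) *\<^sub>R Z"
    and "h q W (Gam q Z Y) + dd (\<lambda>r. h r Z Y) W q = h q Z (Gam q W Y) + dd (\<lambda>r. h r W Y) Z q"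
proof -
  have "dd (dd (dd x Y) Z) W q = dd (dd (dd x Y) W) Z q"
    using smooth_on_dd_commute[OF smooth_on_dd[OF x_smooth] U_open q] .
  then have "dd x (dd (\<lambda>r. Gam r Z Y) W q + Gam q W (Gam q Z Y) - (eps * h q Z Y) *\<^sub>R W) q
      + (- (eps * (h q W (Gam q Z Y) + dd (\<lambda>r. h r Z Y) W q))) *\<^sub>R x q
    = dd x (dd (\<lambda>r. Gam r W Y) Z q + Gam q Z (Gam q W Y) - (eps * h q W Y) *\<^sub>R Z) q
      + (- (eps * (h q Z (Gam q W Y) + dd (\<lambda>r. h r W Y) Z q))) *\<^sub>R x q"
    unfolding dd_dd_dd_x[OF q] by simp
  from dd_x_decomposition_unique[OF q this] eps_pm show
    "dd (\<lambda>r. Gam r Z Y) W q + Gam q W (Gam q Z Y) - (eps * h q Z Y) *\<^sub>R W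
       = dd (\<lambda>r. Gam r W Y) Z q + Gam q Z (Gam q W Y) - (eps * h q W Y) *\<^sub>R Z"
    "h q W (Gam q Z Y) + dd (\<lambda>r. h r Z Y) W q = h q Z (Gam q W Y) + dd (\<lambda>r. h r W Y) Z q"
    by auto
qed

lemma h_K_commute: "q \<in> U \<Longrightarrow> h q (K q Z Y) W = h q (K q W Y) Z"
proof -
  assume q: "q \<in> U"
  have "h q W (Gam q Z Y) + (h q (Gh q W Z) Y + h q Z (Gh q W Y))
      = h q Z (Gam q W Y) + (h q (Gh q Z W) Y + h q W (Gh q Z Y))"
    using gauss_codazzi(2)[OF q, of W Z Y] unfolding dd_h[OF q] .
  then have "h q W (K q Z Y) = h q Z (K q W Y)"
    unfolding diffK_def bilinear_rsub[OF bilinear_h[OF q]] LC_torsionfree[OF q, of W Z] by simp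
  then show ?thesis using h_commute[OF q] by metis
qed

lemmas bilinear_simps =
  bilinear_ladd[OF bilinear_h] bilinear_radd[OF bilinear_h] bilinear_lmul[OF bilinear_h]
  bilinear_rmul[OF bilinear_h] bilinear_lsub[OF bilinear_h] bilinear_rsub[OF bilinear_h]
  bilinear_lneg[OF bilinear_h] bilinear_rneg[OF bilinear_h]
  bilinear_ladd[OF bilinear_Gh] bilinear_radd[OF bilinear_Gh] bilinear_lmul[OF bilinear_Gh]
  bilinear_rmul[OF bilinear_Gh] bilinear_lsub[OF bilinear_Gh] bilinear_rsub[OF bilinear_Gh]
  bilinear_lneg[OF bilinear_Gh] bilinear_rneg[OF bilinear_Gh]
  bilinear_ladd[OF bilinear_K] bilinear_radd[OF bilinear_K] bilinear_lmul[OF bilinear_K]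
  bilinear_rmul[OF bilinear_K] bilinear_lsub[OF bilinear_K] bilinear_rsub[OF bilinear_K]
  bilinear_lneg[OF bilinear_K] bilinear_rneg[OF bilinear_K]

end

section \<open>The Ricci identity\<close>

definition sym_metric_tensor :: "('a \<Rightarrow> 'a \<Rightarrow> real) \<Rightarrow> 'a \<Rightarrow> 'a \<Rightarrow> 'a \<Rightarrow> 'a::real_vector" where
  "sym_metric_tensor g Z X Y = g X Y *\<^sub>R Z + g X Z *\<^sub>R Y + g Y Z *\<^sub>R X"

text \<open>The curvature \<open>R(W,Z)V\<close> of the Levi-Civita connection of \<open>h\<close>, in the form given by
  the Gauss equation (lemma \<open>gauss_equation\<close>).\<close>
definition centroaffine_curvature ::
    "real \<Rightarrow> ('a \<Rightarrow> 'a \<Rightarrow> real) \<Rightarrow> ('a \<Rightarrow> 'a \<Rightarrow> 'a) \<Rightarrow> 'a \<Rightarrow> 'a \<Rightarrow> 'a \<Rightarrow> 'a::real_vector" where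
  "centroaffine_curvature eps g K W Z V =
     (eps * g Z V) *\<^sub>R W - (eps * g W V) *\<^sub>R Z - K W (K Z V) + K Z (K W V)"

locale isotropic_covK_chart = centroaffine_chart U x eps h Gam Gh
  for U :: "(real^'n) set"
    and x :: "real^'n \<Rightarrow> real^'m"
    and eps :: real
    and h :: "real^'n \<Rightarrow> real^'n \<Rightarrow> real^'n \<Rightarrow> real"
    and Gam Gh :: "real^'n \<Rightarrow> real^'n \<Rightarrow> real^'n \<Rightarrow> real^'n" +
  fixes mu :: "real^'n \<Rightarrow> real"
  assumes mu_smooth: "smooth_on U mu"
    and covK_eq: "\<And>q X Y Z. q \<in> U \<Longrightarrow>
        covK Gam Gh q Z X Y = mu q *\<^sub>R (h q X Y *\<^sub>R Z + h q X Z *\<^sub>R Y + h q Y Z *\<^sub>R X)"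
begin

abbreviation R :: "real^'n \<Rightarrow> real^'n \<Rightarrow> real^'n \<Rightarrow> real^'n \<Rightarrow> real^'n" where
  "R q \<equiv> centroaffine_curvature eps (h q) (K q)"

abbreviation S :: "real^'n \<Rightarrow> real^'n \<Rightarrow> real^'n \<Rightarrow> real^'n \<Rightarrow> real^'n" where
  "S q \<equiv> sym_metric_tensor (h q)"

lemma differentiable_mu: "q \<in> U \<Longrightarrow> mu differentiable at q"
  using smooth_on_differentiable_at[OF mu_smooth U_open] .

lemma dd_K:
  "q \<in> U \<Longrightarrow> dd (\<lambda>r. K r X Y) Z q
    = mu q *\<^sub>R S q Z X Y - Gh q Z (K q X Y) + K q (Gh q Z X) Y + K q X (Gh q Z Y)"
  using covK_eq[of q Z X Y] unfolding covK_def dd_def sym_metric_tensor_def by (simp add: algebra_simps)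

lemma gauss_equation:
  assumes q: "q \<in> U"
  shows "dd (\<lambda>r. Gh r Z V) W q + Gh q W (Gh q Z V) - dd (\<lambda>r. Gh r W V) Z q - Gh q Z (Gh q W V)
    = R q W Z V"
proof -
  have Gam: "Gam q A B = Gh q A B + K q A B" for A B
    by (simp add: diffK_def)
  have dGam: "dd (\<lambda>r. Gam r A B) C q = dd (\<lambda>r. Gh r A B) C q + dd (\<lambda>r. K r A B) C q" for A B C
    using dd_add[OF differentiable_Gh[OF q] differentiable_K[OF q], of A B A B C]
    by (simp add: diffK_def)
  from gauss_codazzi(1)[OF q, of Z V W] show ?thesis
    unfolding dGam Gam dd_K[OF q] centroaffine_curvature_def sym_metric_tensor_def
    by (simp add: bilinear_simps q algebra_simps h_commute[OF q] K_commute[OF q] LC_torsionfree[OF q])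
qed

lemma covK_expand:
  "covK Gam Gh q Z X Y
    = dd (\<lambda>r. K r X Y) Z q + Gh q Z (K q X Y) - K q (Gh q Z X) Y - K q X (Gh q Z Y)"
  by (simp add: covK_def dd_def)

lemma dd_covK:
  assumes q: "q \<in> U"
  shows "dd (\<lambda>r. covK Gam Gh r Z X Y) W q = dd (dd (\<lambda>r. K r X Y) Z) W q
    + Gh q Z (dd (\<lambda>r. K r X Y) W q) + dd (\<lambda>r. Gh r Z (K q X Y)) W q
    - K q (dd (\<lambda>r. Gh r Z X) W q) Y - dd (\<lambda>r. K r (Gh q Z X) Y) W q
    - K q X (dd (\<lambda>r. Gh r Z Y) W q) - dd (\<lambda>r. K r X (Gh q Z Y)) W q"
proof -
  have lin: "linear (Gh r Z)" "linear (\<lambda>v. K r v Y)" "linear (K r X)" if "r \<in> U" for r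
    using bilinear_Gh[OF that] bilinear_K[OF that] unfolding bilinear_def by auto
  note a1 = dd_apply_family[OF U_open q lin(1) differentiable_Gh[OF q] differentiable_K[OF q]]
  note a2 = dd_apply_family[OF U_open q lin(2) differentiable_K[OF q] differentiable_Gh[OF q]]
  note a3 = dd_apply_family[OF U_open q lin(3) differentiable_K[OF q] differentiable_Gh[OF q]]
  have "((\<lambda>r. dd (\<lambda>r. K r X Y) Z r + Gh r Z (K r X Y) - K r (Gh r Z X) Y - K r X (Gh r Z Y))
      has_derivative (\<lambda>v. dd (dd (\<lambda>r. K r X Y) Z) v q + dd (\<lambda>r. Gh r Z (K r X Y)) v q
        - dd (\<lambda>r. K r (Gh r Z X) Y) v q - dd (\<lambda>r. K r X (Gh r Z Y)) v q)) (at q)"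
    by (intro has_derivative_diff has_derivative_add has_derivative_dd a1(2) a2(2) a3(2)
        smooth_on_differentiable_at[OF smooth_on_dd[OF smooth_on_K] U_open q])
  from dd_eqI[OF this] show ?thesis
    unfolding covK_expand by (simp add: a1(1) a2(1) a3(1))
qed

lemma dd_mu_S:
  assumes q: "q \<in> U"
  shows "dd (\<lambda>r. mu r *\<^sub>R S r Z X Y) W q
    = dd mu W q *\<^sub>R S q Z X Y + mu q *\<^sub>R (dd (\<lambda>r. h r X Y) W q *\<^sub>R Z
        + dd (\<lambda>r. h r X Z) W q *\<^sub>R Y + dd (\<lambda>r. h r Y Z) W q *\<^sub>R X)"
    and "(\<lambda>r. mu r *\<^sub>R S r Z X Y) differentiable at q"
proof -
  have "((\<lambda>r. mu r *\<^sub>R S r Z X Y) has_derivative (\<lambda>v. mu q *\<^sub>R (dd (\<lambda>r. h r X Y) v q *\<^sub>R Z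
        + dd (\<lambda>r. h r X Z) v q *\<^sub>R Y + dd (\<lambda>r. h r Y Z) v q *\<^sub>R X) + dd mu v q *\<^sub>R S q Z X Y)) (at q)"
    unfolding sym_metric_tensor_def
    by (intro has_derivative_scaleR has_derivative_add has_derivative_scaleR_left has_derivative_dd
        differentiable_h[OF q] differentiable_mu[OF q])
  then show "dd (\<lambda>r. mu r *\<^sub>R S r Z X Y) W q
    = dd mu W q *\<^sub>R S q Z X Y + mu q *\<^sub>R (dd (\<lambda>r. h r X Y) W q *\<^sub>R Z
        + dd (\<lambda>r. h r X Z) W q *\<^sub>R Y + dd (\<lambda>r. h r Y Z) W q *\<^sub>R X)"
    and "(\<lambda>r. mu r *\<^sub>R S r Z X Y) differentiable at q"
    by (auto simp: dd_eqI add.commute differentiable_def)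
qed

text \<open>Differentiate \<open>covK_eq\<close> in direction \<open>W\<close> and alternate in \<open>W\<close>, \<open>Z\<close>: the second derivatives
  of \<open>K\<close> cancel, and the Gauss equation turns the remaining terms into \<open>R\<close> acting on \<open>K\<close> as a
  derivation.\<close>
lemma ricci_identity:
  assumes q: "q \<in> U"
  shows "R q W Z (K q X Y) - K q (R q W Z X) Y - K q X (R q W Z Y)
    = dd mu W q *\<^sub>R S q Z X Y - dd mu Z q *\<^sub>R S q W X Y"
proof -
  have covK_S: "dd (\<lambda>r. covK Gam Gh r B X Y) A q = dd (\<lambda>r. mu r *\<^sub>R S r B X Y) A q" for A B
    by (rule sym, rule dd_cong_open[OF U_open q _ dd_mu_S(2)[OF q]])
      (simp add: covK_eq sym_metric_tensor_def)
  have dGh: "dd (\<lambda>r. Gh r Z V) W q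
      = dd (\<lambda>r. Gh r W V) Z q - Gh q W (Gh q Z V) + Gh q Z (Gh q W V) + R q W Z V" for V
    using gauss_equation[OF q, of Z V W] by (simp add: algebra_simps)
  have "R q W Z (K q X Y) - K q (R q W Z X) Y - K q X (R q W Z Y)
      - (dd mu W q *\<^sub>R S q Z X Y - dd mu Z q *\<^sub>R S q W X Y)
    = (dd (\<lambda>r. covK Gam Gh r Z X Y) W q - dd (\<lambda>r. covK Gam Gh r W X Y) Z q)
      - (dd (\<lambda>r. mu r *\<^sub>R S r Z X Y) W q - dd (\<lambda>r. mu r *\<^sub>R S r W X Y) Z q)"
    unfolding dd_covK[OF q] dd_mu_S(1)[OF q]
      smooth_on_dd_commute[OF smooth_on_K U_open q, of X Y Z W] dGh dd_K[OF q] dd_h[OF q]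
    unfolding centroaffine_curvature_def sym_metric_tensor_def
    by (simp add: bilinear_simps q algebra_simps h_commute[OF q] K_commute[OF q] LC_torsionfree[OF q])
  then show ?thesis
    using covK_S by simp
qed

section \<open>The eigenframe of \<open>K\<^sub>e\<^sub>1\<close>\<close>

lemma one_in_card_interval: "1 \<in> {1..CARD('a::finite)}"
  by (simp add: Suc_leI)

context
  fixes p :: "real^'n" and e :: "nat \<Rightarrow> real^'n" and lam :: "nat \<Rightarrow> real"
  assumes p_in: "p \<in> U"
    and e_orthonormal: "\<And>i j. i \<in> {1..CARD('n)} \<Longrightarrow> j \<in> {1..CARD('n)} \<Longrightarrow>
        h p (e i) (e j) = (if i = j then 1 else 0)"
    and eigen: "\<And>i. i \<in> {1..CARD('n)} \<Longrightarrow> K p (e 1) (e i) = lam i *\<^sub>R e i"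
begin

lemma h_K_e1:
  assumes l: "l \<in> {1..CARD('n)}"
  shows "h p (K p (e 1) u) (e l) = lam l * h p u (e l)"
    and "h p (K p u (e 1)) (e l) = lam l * h p u (e l)"
proof -
  have "h p (K p u (e 1)) (e l) = h p (K p (e 1) (e l)) u"
    using h_K_commute[OF p_in] K_commute[OF p_in] by metis
  also have "\<dots> = lam l * h p u (e l)"
    using eigen[OF l] bilinear_simps p_in h_commute[OF p_in] by simp
  finally show "h p (K p u (e 1)) (e l) = lam l * h p u (e l)" .
  then show "h p (K p (e 1) u) (e l) = lam l * h p u (e l)"
    using K_commute[OF p_in] by metis
qed

lemma frame_first:
  shows "h p (e 1) (e 1) = 1" and "K p (e 1) (e 1) = lam 1 *\<^sub>R e 1"
    and "h p (K p (e 1) u) (e 1) = lam 1 * h p u (e 1)"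
    and "h p (K p u (e 1)) (e 1) = lam 1 * h p u (e 1)"
  using e_orthonormal[OF one_in_card_interval one_in_card_interval] eigen[OF one_in_card_interval]
    h_K_e1[OF one_in_card_interval] by simp_all

lemma dd_mu_frame: "dd mu Z p = dd mu (e 1) p * h p Z (e 1)"
proof -
  note ricci = arg_cong[OF ricci_identity[OF p_in, of "e 1" Z "e 1" "e 1"], where f="\<lambda>v. h p v (e 1)"]
  have "3 * dd mu Z p = 3 * (dd mu (e 1) p * h p Z (e 1))"
    using ricci unfolding centroaffine_curvature_def sym_metric_tensor_def
    by (simp only: bilinear_simps p_in frame_first h_commute[OF p_in, of "e 1" Z])
      (simp add: algebra_simps)
  then show ?thesis by simp
qed

lemma frame_lower:
  assumes i: "i \<in> {2..CARD('n)}"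
  shows "i \<in> {1..CARD('n)}" and "h p (e 1) (e i) = 0" and "h p (e i) (e 1) = 0"
    and "h p (e i) (e i) = 1" and "K p (e i) (e 1) = lam i *\<^sub>R e i" and "dd mu (e i) p = 0"
proof -
  show i1: "i \<in> {1..CARD('n)}" using i by simp
  show h1i: "h p (e 1) (e i) = 0" "h p (e i) (e 1) = 0" "h p (e i) (e i) = 1"
    using e_orthonormal[OF one_in_card_interval i1] e_orthonormal[OF i1 one_in_card_interval]
      e_orthonormal[OF i1 i1] i by auto
  show "K p (e i) (e 1) = lam i *\<^sub>R e i"
    using eigen[OF i1] K_commute[OF p_in] by metis
  show "dd mu (e i) p = 0"
    using dd_mu_frame[of "e i"] h1i by simp
qed

lemma eigenvalue_equation:
  assumes i: "i \<in> {2..CARD('n)}"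
  shows "(lam 1 - 2 * lam i) * (lam i * (lam 1 - lam i) - eps) = dd mu (e 1) p"
  using arg_cong[OF ricci_identity[OF p_in, of "e 1" "e i" "e 1" "e 1"], where f="\<lambda>v. h p v (e i)"]
  unfolding centroaffine_curvature_def sym_metric_tensor_def
  by (simp only: bilinear_simps p_in frame_first frame_lower[OF i]
      eigen[OF frame_lower(1)[OF i]] h_K_e1[OF frame_lower(1)[OF i]])
    (simp add: algebra_simps)

lemma cubic_form_equation1:
  assumes j: "j \<in> {2..CARD('n)}" and k: "k \<in> {2..CARD('n)}" and l: "l \<in> {2..CARD('n)}"
  shows "(lam j - lam k) * (lam 1 - 2 * lam l) * h p (K p (e j) (e k)) (e l) = 0"
proof -
  have "K p (e k) (e j) = K p (e j) (e k)" using K_commute[OF p_in] by metis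
  then show ?thesis
    using arg_cong[OF ricci_identity[OF p_in, of "e j" "e k" "e 1" "e 1"], where f="\<lambda>v. h p v (e l)"]
    unfolding centroaffine_curvature_def sym_metric_tensor_def
    by (simp only: bilinear_simps p_in frame_first frame_lower[OF j]
        frame_lower[OF k] frame_lower[OF l] eigen[OF frame_lower(1)[OF j]]
        eigen[OF frame_lower(1)[OF k]] h_K_e1[OF frame_lower(1)[OF l]])
      (simp add: algebra_simps)
qed

lemma cubic_form_equation2:
  assumes i: "i \<in> {2..CARD('n)}" and j: "j \<in> {2..CARD('n)}" and k: "k \<in> {2..CARD('n)}"
  shows "((lam j - lam k)\<^sup>2 - (lam i * (lam 1 - lam i) - eps)) * h p (K p (e i) (e j)) (e k) = 0"
  using arg_cong[OF ricci_identity[OF p_in, of "e 1" "e i" "e 1" "e j"], where f="\<lambda>v. h p v (e k)"]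
  unfolding centroaffine_curvature_def sym_metric_tensor_def
  by (simp only: bilinear_simps p_in frame_first frame_lower[OF i]
      frame_lower[OF j] frame_lower[OF k] eigen[OF frame_lower(1)[OF i]]
      eigen[OF frame_lower(1)[OF j]] h_K_e1[OF frame_lower(1)[OF k]])
    (simp add: algebra_simps power2_eq_square)

text \<open>Since \<open>d\<mu>(e\<^sub>1) \<noteq> 0\<close>, the eigenvalue equation rules out both \<open>\<lambda>\<^sub>1 = 2\<lambda>\<^sub>i\<close> and
  \<open>\<lambda>\<^sub>i(\<lambda>\<^sub>1 - \<lambda>\<^sub>i) = \<epsilon>\<close>; the two cubic form equations then force \<open>h(K(e\<^sub>i,e\<^sub>j),e\<^sub>k) = 0\<close>.\<close>
lemma cubic_form_lower_zero:
  assumes dmu: "dd mu (e 1) p \<noteq> 0"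
    and i: "i \<in> {2..CARD('n)}" and j: "j \<in> {2..CARD('n)}" and k: "k \<in> {2..CARD('n)}"
  shows "h p (K p (e i) (e j)) (e k) = 0"
proof -
  define c where "c = h p (K p (e i) (e j)) (e k)"
  have nz: "lam 1 - 2 * lam i \<noteq> 0" "lam i * (lam 1 - lam i) - eps \<noteq> 0"
    using eigenvalue_equation[OF i] dmu by auto
  have "h p (K p (e j) (e k)) (e i) = c"
    unfolding c_def by (metis h_K_commute[OF p_in] K_commute[OF p_in])
  then have "(lam j - lam k) * c = 0"
    using cubic_form_equation1[OF j k i] nz(1) by simp
  moreover have "((lam j - lam k)\<^sup>2 - (lam i * (lam 1 - lam i) - eps)) * c = 0"
    using cubic_form_equation2[OF i j k] unfolding c_def .
  moreover have "(lam i * (lam 1 - lam i) - eps) * c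
      = (lam j - lam k) * ((lam j - lam k) * c)
        - ((lam j - lam k)\<^sup>2 - (lam i * (lam 1 - lam i) - eps)) * c"
    by (simp add: algebra_simps power2_eq_square)
  ultimately have "(lam i * (lam 1 - lam i) - eps) * c = 0"
    by (metis diff_zero mult_zero_right)
  then show ?thesis
    using nz(2) unfolding c_def by simp
qed

lemma K_lower_block:
  assumes dmu: "dd mu (e 1) p \<noteq> 0"
    and i: "i \<in> {2..CARD('n)}" and j: "j \<in> {2..CARD('n)}"
  shows "K p (e i) (e j) = (if i = j then lam i else 0) *\<^sub>R e 1"
proof -
  let ?v = "K p (e i) (e j)"
  have "?v = (\<Sum>k\<in>{1..CARD('n)}. h p ?v (e k) *\<^sub>R e k)"
    by (rule orthonormal_expansion[OF bilinear_h[OF p_in] h_posdef[OF p_in] _ _ e_orthonormal]) simp_all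
  also have "\<dots> = h p ?v (e 1) *\<^sub>R e 1 + (\<Sum>k\<in>{2..CARD('n)}. h p ?v (e k) *\<^sub>R e k)"
    using sum.atLeast_Suc_atMost[of 1 "CARD('n)"] by (simp add: Suc_leI numeral_2_eq_2)
  also have "(\<Sum>k\<in>{2..CARD('n)}. h p ?v (e k) *\<^sub>R e k) = 0"
    using cubic_form_lower_zero[OF dmu i j] by simp
  also have "h p ?v (e 1) = h p (K p (e 1) (e j)) (e i)"
    using h_K_commute[OF p_in] .
  also have "\<dots> = (if i = j then lam i else 0)"
    using eigen[OF frame_lower(1)[OF j]] e_orthonormal[OF frame_lower(1)[OF j] frame_lower(1)[OF i]]
      bilinear_simps p_in by simp
  finally show ?thesis by simp
qed

end

end

theorem lemma4p2:
  fixes U :: "(real^'n) set"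
    and x :: "real^'n \<Rightarrow> real^'m"
    and eps :: real
    and h :: "real^'n \<Rightarrow> real^'n \<Rightarrow> real^'n \<Rightarrow> real"
    and Gam Gh :: "real^'n \<Rightarrow> real^'n \<Rightarrow> real^'n \<Rightarrow> real^'n"
    and mu :: "real^'n \<Rightarrow> real"
    and p :: "real^'n"
    and e :: "nat \<Rightarrow> real^'n"
    and lam :: "nat \<Rightarrow> real"
  assumes dim: "CARD('m) = CARD('n) + 1"
    and U_open: "open U"
    and x_smooth: "smooth_on U x"
    and transversal: "\<And>q v c. q \<in> U \<Longrightarrow>
        frechet_derivative x (at q) v + c *\<^sub>R x q = 0 \<Longrightarrow> v = 0 \<and> c = 0"
    and eps_pm: "eps = 1 \<or> eps = -1"
    and structure_eq: "\<And>q X Y. q \<in> U \<Longrightarrow>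
        frechet_derivative (\<lambda>r. frechet_derivative x (at r) Y) (at q) X
          = frechet_derivative x (at q) (Gam q X Y) + h q X Y *\<^sub>R (- eps *\<^sub>R x q)"
    and h_smooth: "\<And>X Y. smooth_on U (\<lambda>q. h q X Y)"
    and Gam_smooth: "\<And>X Y. smooth_on U (\<lambda>q. Gam q X Y)"
    and Gh_smooth: "\<And>X Y. smooth_on U (\<lambda>q. Gh q X Y)"
    and h_posdef: "\<And>q X. q \<in> U \<Longrightarrow> X \<noteq> 0 \<Longrightarrow> h q X X > 0"
    and LC_torsionfree: "\<And>q X Y. q \<in> U \<Longrightarrow> Gh q X Y = Gh q Y X"
    and LC_metric: "\<And>q X Y Z. q \<in> U \<Longrightarrow>
        frechet_derivative (\<lambda>r. h r X Y) (at q) Z = h q (Gh q Z X) Y + h q X (Gh q Z Y)"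
    and mu_smooth: "smooth_on U mu"
    and mu_nonconst: "\<not> (\<exists>c. \<forall>q\<in>U. mu q = c)"
    and covK_eq: "\<And>q X Y Z. q \<in> U \<Longrightarrow>
        covK Gam Gh q Z X Y = mu q *\<^sub>R (h q X Y *\<^sub>R Z + h q X Z *\<^sub>R Y + h q Y Z *\<^sub>R X)"
    and p_in: "p \<in> U"
    and dmu_p: "\<exists>v. frechet_derivative mu (at p) v \<noteq> 0"
    and e_orthonormal: "\<And>i j. i \<in> {1..CARD('n)} \<Longrightarrow> j \<in> {1..CARD('n)} \<Longrightarrow>
        h p (e i) (e j) = (if i = j then 1 else 0)"
    and e1_max: "\<And>u. h p u u = 1 \<Longrightarrow>
        h p (diffK Gam Gh p u u) u \<le> h p (diffK Gam Gh p (e 1) (e 1)) (e 1)"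
    and eigen: "\<And>i. i \<in> {1..CARD('n)} \<Longrightarrow> diffK Gam Gh p (e 1) (e i) = lam i *\<^sub>R e i"
    and lam_ineq: "\<And>i. i \<in> {2..CARD('n)} \<Longrightarrow> lam 1 \<ge> 2 * lam i"
    and lam_eq: "\<And>i. i \<in> {2..CARD('n)} \<Longrightarrow> lam 1 = 2 * lam i \<Longrightarrow>
        h p (diffK Gam Gh p (e i) (e i)) (e i) = 0"
  shows "diffK Gam Gh p (e 1) (e 1) = lam 1 *\<^sub>R e 1
    \<and> (\<forall>i\<in>{2..CARD('n)}. diffK Gam Gh p (e 1) (e i) = lam i *\<^sub>R e i)
    \<and> (\<forall>i\<in>{2..CARD('n)}. \<forall>j\<in>{2..CARD('n)}.
          diffK Gam Gh p (e i) (e j) = (if i = j then lam i else 0) *\<^sub>R e 1)"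
proof -
  interpret isotropic_covK_chart U x eps h Gam Gh mu
    by standard (fact U_open x_smooth transversal eps_pm structure_eq h_smooth Gam_smooth Gh_smooth
        h_posdef LC_torsionfree LC_metric mu_smooth covK_eq)+
  have "dd mu (e 1) p \<noteq> 0"
    using dmu_p dd_mu_frame[OF p_in e_orthonormal eigen] unfolding dd_def by (metis mult_zero_left)
  then show ?thesis
    using eigen K_lower_block[OF p_in e_orthonormal eigen] one_in_card_interval by auto
qed

end
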